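(* Let $L\ge1$ and $\alpha\in(\alpha_{L+1},\alpha_L)$, and let $c_1,\dots,c_L>0$ and $d_0(L)>0$ be the constants from the affine medium-size system. If $(l_0,\dots,l_{L+2})\in\mathbb{R}^{L+3}$ satisfies $l_0=0$, $l_{L+2}\ge0$, $\sum_{j=1}^{L+1}l_j=1$, and $d_j:=-\alpha l_{j-1}+l_j-l_{j+1}+\alpha l_{j+2}$ for $j\in\{1,\dots,L\}$, then $$d_0\ge d_0(L)-\sum_{k=1}^Lc_{L+1-k}d_k,\qquad\text{where } d_0:=-l_1+\alpha l_2.$$
   Context: Define $\alpha_1:=+\infty$ and, for $L\ge2$, $\alpha_L:=\dfrac{1}{1+2\cos(\frac{2\pi}{L+2})}$. For real $d_1,\dots,d_L$, the system $AS(d_1,\dots,d_L)$ on $(l_0,\dots,l_{L+2})$ is: $l_0=l_{L+2}=0$; $d_j=-\alpha l_{j-1}+l_j-l_{j+1}+\alpha l_{j+2}$ for $j\in\{1,\dots,L\}$; $\sum_{j=1}^{L+1}l_j=1$. It is a fact (proved in the paper) that there are constants $c_1,\dots,c_L>0$ depending only on $\alpha,L$ such that for all $d_1,\dots,d_L$ this system has a unique solution with $-l_1+\alpha l_2=d_0(L)-\sum_{k=1}^Lc_{L+1-k}d_k$ and $-\alpha l_L+l_{L+1}=-d_0(L)-\sum_{k=1}^Lc_kd_k$; here $d_0(L)>0$ is the value of $-l_1+\alpha l_2$ at the solution of $AS(0,\dots,0)$. *)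

theory Defs
  imports Complex_Main "HOL-Library.Extended_Real"
begin

definition alpha_seq :: "nat \<Rightarrow> ereal" where
  "alpha_seq L = (if L = 1 then \<infinity>
                  else ereal (1 / (1 + 2 * cos (2 * pi / real (L + 2)))))"

text \<open>The affine system AS(d_1,...,d_L) on (l_0,...,l_{L+2}); only the entries
  l 0 .. l (L+2) and d 1 .. d L are relevant.\<close>
definition AS :: "real \<Rightarrow> nat \<Rightarrow> (nat \<Rightarrow> real) \<Rightarrow> (nat \<Rightarrow> real) \<Rightarrow> bool" where
  "AS \<alpha> L d l \<longleftrightarrow> l 0 = 0 \<and> l (L + 2) = 0 \<and>
     (\<forall>j\<in>{1..L}. d j = - \<alpha> * l (j - 1) + l j - l (j + 1) + \<alpha> * l (j + 2)) \<and>
     (\<Sum>j=1..L+1. l j) = 1"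

text \<open>c (indexed 1..L) and D0 = d_0(L) are the constants of the affine medium-size
  system: for every d, AS(d) has a unique solution, and at it
  -l_1 + alpha l_2 = D0 - sum c_{L+1-k} d_k  and  -alpha l_L + l_{L+1} = -D0 - sum c_k d_k.\<close>
definition AS_constants :: "real \<Rightarrow> nat \<Rightarrow> (nat \<Rightarrow> real) \<Rightarrow> real \<Rightarrow> bool" where
  "AS_constants \<alpha> L c D0 \<longleftrightarrow>
     (\<forall>k\<in>{1..L}. c k > 0) \<and>
     (\<forall>d. (\<exists>l. AS \<alpha> L d l) \<and>
          (\<forall>l l'. AS \<alpha> L d l \<longrightarrow> AS \<alpha> L d l' \<longrightarrow> (\<forall>i\<le>L+2. l i = l' i)) \<and>
          (\<forall>l. AS \<alpha> L d l \<longrightarrow>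
              - l 1 + \<alpha> * l 2 = D0 - (\<Sum>k=1..L. c (L + 1 - k) * d k) \<and>
              - \<alpha> * l L + l (L + 1) = - D0 - (\<Sum>k=1..L. c k * d k))) \<and>
     (\<forall>l. AS \<alpha> L (\<lambda>_. 0) l \<longrightarrow> D0 = - l 1 + \<alpha> * l 2) \<and>
     D0 > 0"

end

theory Submission
  imports Defs
begin

(* Replace l by its truncation m = l(L+2 := 0).  Then m satisfies
   the boundary conditions and the normalisation of the affine system, so m is THE solution
   of AS(d'), where d' are the residuals of m.  The residuals of m and l agree except at
   j = L, where d'_L = d_L - alpha * l_{L+2}.  The affine formula for the solution gives
     -m_1 + alpha m_2 = d_0(L) - sum_k c_{L+1-k} d'_k
                      = d_0(L) - sum_k c_{L+1-k} d_k + c_1 alpha l_{L+2},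
   and the last term is nonnegative since c_1 > 0, l_{L+2} >= 0 and alpha > 0
   (alpha exceeds alpha_{L+1}, which is positive).  Since m_1 = l_1 and m_2 = l_2 (L >= 1),
   the claimed inequality follows. *)

(* The thresholds alpha_L are positive for every L >= 1: for L >= 2 the angle 2 pi/(L+2)
   lies in [0, pi/2], so the cosine is nonnegative. *)
lemma alpha_seq_pos:
  assumes "L \<ge> 1"
  shows "0 < alpha_seq L"
proof (cases "L = 1")
  case True
  then show ?thesis by (simp add: alpha_seq_def)
next
  case False
  then have "2 * pi / real (L + 2) \<le> pi / 2"
    using assms by (simp add: field_simps)
  moreover have "0 \<le> 2 * pi / real (L + 2)" by simp
  ultimately have "cos (2 * pi / real (L + 2)) \<ge> 0"
    by (intro cos_ge_zero) (auto intro: order_trans[of _ 0])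
  then show ?thesis using False by (simp add: alpha_seq_def)
qed

definition residual :: "real \<Rightarrow> (nat \<Rightarrow> real) \<Rightarrow> nat \<Rightarrow> real" where
  "residual \<alpha> l j = - \<alpha> * l (j - 1) + l j - l (j + 1) + \<alpha> * l (j + 2)"

lemma truncation_solves_AS:
  assumes "l 0 = 0" and "(\<Sum>j=1..L+1. l j) = 1"
  shows "AS \<alpha> L (residual \<alpha> (l(L + 2 := 0))) (l(L + 2 := 0))"
  using assms unfolding AS_def residual_def by simp

lemma residual_truncation:
  assumes "j \<in> {1..L}"
  shows "residual \<alpha> (l(L + 2 := 0)) j
           = residual \<alpha> l j - (if j = L then \<alpha> * l (L + 2) else 0)"
  using assms by (auto simp: residual_def)

lemma weighted_residual_truncation:
  assumes "L \<ge> 1"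
  shows "(\<Sum>k=1..L. c (L + 1 - k) * residual \<alpha> (l(L + 2 := 0)) k)
           = (\<Sum>k=1..L. c (L + 1 - k) * residual \<alpha> l k) - c 1 * \<alpha> * l (L + 2)"
proof -
  have "(\<Sum>k=1..L. c (L + 1 - k) * residual \<alpha> (l(L + 2 := 0)) k)
        = (\<Sum>k=1..L. c (L + 1 - k) * residual \<alpha> l k
                      - (if k = L then c 1 * \<alpha> * l (L + 2) else 0))"
  proof (rule sum.cong)
    fix k assume "k \<in> {1..L}"
    then show "c (L + 1 - k) * residual \<alpha> (l(L + 2 := 0)) k
               = c (L + 1 - k) * residual \<alpha> l k - (if k = L then c 1 * \<alpha> * l (L + 2) else 0)"
      by (simp only: residual_truncation) (simp add: algebra_simps)
  qed simp
  also have "\<dots> = (\<Sum>k=1..L. c (L + 1 - k) * residual \<alpha> l k) - c 1 * \<alpha> * l (L + 2)"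
    using assms by (simp add: sum_subtractf)
  finally show ?thesis .
qed

theorem mainTheorem10:
  fixes \<alpha> :: real and L :: nat and c :: "nat \<Rightarrow> real" and D0 :: real
    and l :: "nat \<Rightarrow> real"
  assumes "L \<ge> 1"
    and "alpha_seq (L + 1) < ereal \<alpha>" and "ereal \<alpha> < alpha_seq L"
    and "AS_constants \<alpha> L c D0"
    and "l 0 = 0" and "l (L + 2) \<ge> 0" and "(\<Sum>j=1..L+1. l j) = 1"
  shows "- l 1 + \<alpha> * l 2 \<ge>
           D0 - (\<Sum>k=1..L. c (L + 1 - k) *
                   (- \<alpha> * l (k - 1) + l k - l (k + 1) + \<alpha> * l (k + 2)))"
proof -
  define m where "m = l(L + 2 := 0)"
  have "0 < alpha_seq (L + 1)" by (rule alpha_seq_pos) simp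
  with assms(2) have "0 < ereal \<alpha>" by (rule order.strict_trans[rotated])
  then have alpha_pos: "\<alpha> > 0" by simp
  have "AS \<alpha> L (residual \<alpha> m) m"
    unfolding m_def using assms(5,7) by (rule truncation_solves_AS)
  with assms(4) have formula: "- m 1 + \<alpha> * m 2 = D0 - (\<Sum>k=1..L. c (L + 1 - k) * residual \<alpha> m k)"
    unfolding AS_constants_def by blast
  have "c 1 > 0" using assms(1,4) unfolding AS_constants_def by auto
  then have "c 1 * \<alpha> * l (L + 2) \<ge> 0" using alpha_pos assms(6) by simp
  moreover have "- m 1 + \<alpha> * m 2 = - l 1 + \<alpha> * l 2" using assms(1) by (simp add: m_def)
  ultimately show ?thesis
    using formula weighted_residual_truncation[OF assms(1), of c \<alpha> l]
    unfolding m_def residual_def by linarith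
qed

end
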